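(* In the setting below, assume that $U$ has the Tsirelson property: there is $C>0$ such that for every $n\in\mathbb N$, every normalized block sequence $(v_j)_{j=1}^n$ of $(u_i)$ with $n\le\min\mathrm{Supp}(v_1)$ is $C$-equivalent to the unit vector basis of $\ell_1^n$. Then $Y$ is asymptotic-$c_0$.
   Context: Setting: $X$ is a separable Banach space, $(x_n)$ a sequence in $S_X$ with $\{\pm x_n\}$ dense in $S_X$; $U$ is a Banach space with a normalized $1$-unconditional boundedly complete basis $(u_n)$. For finite $I,J\subseteq\mathbb N$, $I<J$ means $\max I<\min J$. $Z$ is the completion of $c_{00}$ (unit vectors $(e_i)$) under $\|a\|_Z=\max\{\|\sum_{j=1}^k\|\sum_{i\in I_j}a_ix_i\|_Xu_{\min I_j}\|_U: k\in\mathbb N,\ I_1<\dots<I_k\text{ intervals}\}$. $(e_j^* )$ are the coordinate functionals of the basis $(e_j)$ of $Z$ and $Y=\overline{\mathrm{span}}\{e_j^*\}\subseteq Z^*$. Asymptotic-$c_0$: there is $C'\ge1$ such that for every $k$: there is a closed finite-codimensional subspace $Y_1$ such that for all $y_1\in S_{Y_1}$ there is a closed finite-codimensional $Y_2$ ... such that for all $y_k\in S_{Y_k}$, $\|\sum_{i=1}^ka_iy_i\|\le C'\max_i|a_i|$ for all $(a_i)\in\mathbb R^k$. *)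

theory Defs
  imports "HOL-Analysis.Analysis"
begin

definition schauder_basis :: "(nat \<Rightarrow> 'b::real_normed_vector) \<Rightarrow> bool" where
  "schauder_basis u \<longleftrightarrow> (\<forall>y. \<exists>!a. (\<lambda>n. a n *\<^sub>R u n) sums y)"

definition coord :: "(nat \<Rightarrow> 'b::real_normed_vector) \<Rightarrow> 'b \<Rightarrow> nat \<Rightarrow> real" where
  "coord u y = (THE a. (\<lambda>n. a n *\<^sub>R u n) sums y)"

definition supp :: "(nat \<Rightarrow> 'b::real_normed_vector) \<Rightarrow> 'b \<Rightarrow> nat set" where
  "supp u y = {i. coord u y i \<noteq> 0}"

definition unconditional1 :: "(nat \<Rightarrow> 'b::real_normed_vector) \<Rightarrow> bool" where
  "unconditional1 u \<longleftrightarrow> (\<forall>a \<epsilon> n. (\<forall>i. \<epsilon> i \<in> {-1, 1}) \<longrightarrow>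
      norm (\<Sum>i<n. (\<epsilon> i * a i) *\<^sub>R u i) = norm (\<Sum>i<n. a i *\<^sub>R u i))"

definition boundedly_complete :: "(nat \<Rightarrow> 'b::real_normed_vector) \<Rightarrow> bool" where
  "boundedly_complete u \<longleftrightarrow> (\<forall>a. (\<exists>M. \<forall>n. norm (\<Sum>i<n. a i *\<^sub>R u i) \<le> M)
      \<longrightarrow> summable (\<lambda>i. a i *\<^sub>R u i))"

text \<open>The paper indexes the basis from 1; here u is indexed from 0,
  so u i here is u_(i+1) of the paper, and "n \<le> min Supp(v_1)" becomes
  "n \<le> min supp + 1".\<close>
definition tsirelson :: "(nat \<Rightarrow> 'b::real_normed_vector) \<Rightarrow> bool" where
  "tsirelson u \<longleftrightarrow> (\<exists>C>0. \<forall>n v.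
     (\<forall>j\<in>{1..n}. norm (v j) = 1 \<and> finite (supp u (v j)) \<and> supp u (v j) \<noteq> {})
     \<and> (\<forall>j. 1 \<le> j \<and> j < n \<longrightarrow> Max (supp u (v j)) < Min (supp u (v (Suc j))))
     \<and> n \<le> Min (supp u (v 1)) + 1
     \<longrightarrow> (\<forall>a. (1 / C) * (\<Sum>j=1..n. \<bar>a j\<bar>) \<le> norm (\<Sum>j=1..n. a j *\<^sub>R v j)
              \<and> norm (\<Sum>j=1..n. a j *\<^sub>R v j) \<le> C * (\<Sum>j=1..n. \<bar>a j\<bar>)))"

section \<open>The space Z (norm on c00) and Y = closed span of the coordinate functionals in Z*\<close>

definition Znorm :: "(nat \<Rightarrow> 'a::real_normed_vector) \<Rightarrow> (nat \<Rightarrow> 'b::real_normed_vector)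
    \<Rightarrow> (nat \<Rightarrow> real) \<Rightarrow> real" where
  "Znorm x u a = Sup {norm (\<Sum>j<k. norm (\<Sum>i\<in>{p j..q j}. a i *\<^sub>R x i) *\<^sub>R u (p j)) | k p q.
      1 \<le> k \<and> (\<forall>j<k. p j \<le> q j) \<and> (\<forall>j. Suc j < k \<longrightarrow> q j < p (Suc j))}"

text \<open>Values of the functional with coefficient sequence b on the unit ball of c00
  (w.r.t. the Z-norm); the dual norm is their supremum.\<close>
definition dual_set :: "(nat \<Rightarrow> 'a::real_normed_vector) \<Rightarrow> (nat \<Rightarrow> 'b::real_normed_vector)
    \<Rightarrow> (nat \<Rightarrow> real) \<Rightarrow> real set" where
  "dual_set x u b = {\<bar>\<Sum>i<n. a i * b i\<bar> | a n. (\<forall>i\<ge>n. a i = 0) \<and> Znorm x u a \<le> 1}"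

definition dualnorm :: "(nat \<Rightarrow> 'a::real_normed_vector) \<Rightarrow> (nat \<Rightarrow> 'b::real_normed_vector)
    \<Rightarrow> (nat \<Rightarrow> real) \<Rightarrow> real" where
  "dualnorm x u b = Sup (dual_set x u b)"

definition Yspace :: "(nat \<Rightarrow> 'a::real_normed_vector) \<Rightarrow> (nat \<Rightarrow> 'b::real_normed_vector)
    \<Rightarrow> (nat \<Rightarrow> real) set" where
  "Yspace x u = {b. \<forall>\<epsilon>>0. \<exists>c m. (\<forall>i\<ge>m. c i = 0)
      \<and> bdd_above (dual_set x u (\<lambda>i. b i - c i)) \<and> dualnorm x u (\<lambda>i. b i - c i) < \<epsilon>}"

definition closed_fincodim :: "(nat \<Rightarrow> real) set \<Rightarrow> ((nat \<Rightarrow> real) \<Rightarrow> real)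
    \<Rightarrow> (nat \<Rightarrow> real) set \<Rightarrow> bool" where
  "closed_fincodim V N W \<longleftrightarrow> W \<subseteq> V \<and> (\<lambda>i. 0) \<in> W
    \<and> (\<forall>w1\<in>W. \<forall>w2\<in>W. (\<lambda>i. w1 i + w2 i) \<in> W)
    \<and> (\<forall>c. \<forall>w\<in>W. (\<lambda>i. c * w i) \<in> W)
    \<and> (\<forall>s y. (\<forall>n. s n \<in> W) \<and> y \<in> V \<and> (\<lambda>n. N (\<lambda>i. s n i - y i)) \<longlonglongrightarrow> 0 \<longrightarrow> y \<in> W)
    \<and> (\<exists>S. finite S \<and> S \<subseteq> V \<and>
         (\<forall>v\<in>V. \<exists>w\<in>W. \<exists>c. v = (\<lambda>i. w i + (\<Sum>s\<in>S. c s * s i))))"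

fun asym_game :: "(nat \<Rightarrow> real) set \<Rightarrow> ((nat \<Rightarrow> real) \<Rightarrow> real) \<Rightarrow> real \<Rightarrow> nat
    \<Rightarrow> (nat \<Rightarrow> real) list \<Rightarrow> bool" where
  "asym_game V N C 0 ys = (\<forall>a. N (\<lambda>i. \<Sum>j<length ys. a j * (ys ! j) i)
        \<le> C * (MAX j\<in>{..<length ys}. \<bar>a j\<bar>))"
| "asym_game V N C (Suc m) ys = (\<exists>W. closed_fincodim V N W \<and>
        (\<forall>y\<in>W. N y = 1 \<longrightarrow> asym_game V N C m (ys @ [y])))"

definition asymptotic_c0 :: "(nat \<Rightarrow> real) set \<Rightarrow> ((nat \<Rightarrow> real) \<Rightarrow> real) \<Rightarrow> bool" where
  "asymptotic_c0 V N \<longleftrightarrow> (\<exists>C\<ge>1. \<forall>k\<ge>1. asym_game V N C k [])"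

end

theory Submission
  imports Defs
begin

text \<open>
  The subspaces {y \<in> Y. y_i = 0 for i < m} are closed and of finite codimension, and the
  tail of an element of Y is eventually small in the dual norm, since Y is the closure of the
  finitely supported functionals. So in the asymptotic game one can produce normalized
  y_1, ..., y_k together with markers k <= l_1 < ... < l_k such that y_j vanishes below l_j
  and its tail from l_(j+1) on has dual norm at most 1/k. Up to an error 1/k per j, pairing
  y_j with z in the unit ball of Z only sees the restriction of z to the window
  [l_j, l_(j+1)). By unconditionality of (u_n), restricting z to a window at most doubles
  its Z-norm, witnessed by intervals inside the window; since all windows start after k,
  the lower l_1-estimate of the Tsirelson property for the resulting block sequence of
  (u_n) bounds the sum of these Z-norms by 2C. Hence
  |<z, sum a_j y_j>| <= (2C + 1) max |a_j|.
\<close>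

section \<open>Interval families and the norm of Z\<close>

definition block_norm :: "(nat \<Rightarrow> 'a::real_normed_vector) \<Rightarrow> (nat \<Rightarrow> real) \<Rightarrow> nat \<times> nat \<Rightarrow> real" where
  "block_norm x z I = norm (\<Sum>i\<in>{fst I..snd I}. z i *\<^sub>R x i)"

definition interval_family :: "(nat \<times> nat) set \<Rightarrow> bool" where
  "interval_family F \<longleftrightarrow> finite F \<and> (\<forall>I\<in>F. fst I \<le> snd I) \<and>
     (\<forall>I\<in>F. \<forall>J\<in>F. I \<noteq> J \<longrightarrow> snd I < fst J \<or> snd J < fst I)"

definition Zval :: "(nat \<Rightarrow> 'a::real_normed_vector) \<Rightarrow> (nat \<Rightarrow> 'b::real_normed_vector)
    \<Rightarrow> (nat \<Rightarrow> real) \<Rightarrow> (nat \<times> nat) set \<Rightarrow> real" where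
  "Zval x u z F = norm (\<Sum>I\<in>F. block_norm x z I *\<^sub>R u (fst I))"

definition Zvals :: "(nat \<Rightarrow> 'a::real_normed_vector) \<Rightarrow> (nat \<Rightarrow> 'b::real_normed_vector)
    \<Rightarrow> (nat \<Rightarrow> real) \<Rightarrow> real set" where
  "Zvals x u z = {Zval x u z F | F. interval_family F \<and> F \<noteq> {}}"

lemma interval_family_inj_fst: "interval_family F \<Longrightarrow> inj_on fst F"
  unfolding interval_family_def inj_on_def by (metis le_trans not_le prod.expand)

lemma interval_chain_sep:
  fixes p q :: "nat \<Rightarrow> nat"
  assumes "\<And>j. j < k \<Longrightarrow> p j \<le> q j" and "\<And>j. Suc j < k \<Longrightarrow> q j < p (Suc j)"
    and "j < j'" and "j' < k"
  shows "q j < p j'"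
proof -
  have mono: "p n \<le> p (Suc n)" if "n \<in> {..<k - 1}" for n
  proof -
    have "Suc n < k" using that by auto
    then show ?thesis using assms(1)[of n] assms(2)[of n] by simp
  qed
  have "{Suc j..<j'} \<subseteq> {..<k - 1}" using assms(4) by auto
  then have "p (Suc j) \<le> p j'"
    using lift_Suc_mono_le_ivl[of "{..<k - 1}" p "Suc j" j'] mono assms(3) by simp
  then show ?thesis using assms(2)[of j] assms(3,4) by simp
qed

lemma interval_family_chain:
  fixes p q :: "nat \<Rightarrow> nat"
  assumes "\<And>j. j < k \<Longrightarrow> p j \<le> q j" and "\<And>j. Suc j < k \<Longrightarrow> q j < p (Suc j)"
  shows "interval_family ((\<lambda>j. (p j, q j)) ` {..<k})" and "inj_on (\<lambda>j. (p j, q j)) {..<k}"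
proof -
  have sep: "q j < p j'" if "j < j'" "j' < k" for j j'
    by (rule interval_chain_sep[where p=p and q=q and k=k]) (use assms that in auto)
  show "inj_on (\<lambda>j. (p j, q j)) {..<k}"
    by (rule inj_onI) (metis sep assms(1) lessThan_iff linorder_neqE_nat not_le prod.inject)
  show "interval_family ((\<lambda>j. (p j, q j)) ` {..<k})"
    unfolding interval_family_def
  proof (intro conjI ballI impI)
    fix I J assume "I \<in> (\<lambda>j. (p j, q j)) ` {..<k}" "J \<in> (\<lambda>j. (p j, q j)) ` {..<k}" "I \<noteq> J"
    then obtain i j where "i < k" "j < k" "i \<noteq> j" "I = (p i, q i)" "J = (p j, q j)" by auto
    then show "snd I < fst J \<or> snd J < fst I"
      using sep[of i j] sep[of j i] by (cases "i < j") auto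
  qed (use assms(1) in auto)
qed

lemma interval_family_enumeration:
  assumes "interval_family F"
  obtains k p q where "\<And>j. j < k \<Longrightarrow> p j \<le> q j" "\<And>j. Suc j < k \<Longrightarrow> q j < p (Suc j)"
    and "F = (\<lambda>j. (p j, q j)) ` {..<k}" and "k = card F"
proof -
  interpret folding_insort_key "(\<le>)" "(<)" F fst
    using interval_family_inj_fst[OF assms] by unfold_locales
  have "finite F" using assms unfolding interval_family_def by blast
  then obtain L where L: "sorted_wrt (<) (map fst L)" "set L = F" "length L = card F"
    by (rule finite_set_strict_sorted[OF subset_refl])
  define p where "p j = fst (L ! j)" for j
  define q where "q j = snd (L ! j)" for j
  have disj: "\<And>I J. I \<in> F \<Longrightarrow> J \<in> F \<Longrightarrow> I \<noteq> J \<Longrightarrow> snd I < fst J \<or> snd J < fst I"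
    using assms unfolding interval_family_def by blast
  have pq_L: "(\<lambda>j. (p j, q j)) = (!) L" unfolding p_def q_def by simp
  have F_eq: "F = (\<lambda>j. (p j, q j)) ` {..<card F}"
    unfolding pq_L using L(2,3) nth_image[of "length L" L] by (simp add: atLeast0LessThan)
  have le: "p j \<le> q j" if "j < card F" for j
    using assms F_eq that unfolding interval_family_def by fastforce
  have sep: "q j < p (Suc j)" if j: "Suc j < card F" for j
  proof -
    have lt: "p j < p (Suc j)"
      using sorted_wrt_nth_less[OF L(1), of j "Suc j"] j L(3) unfolding p_def by simp
    have "(p j, q j) \<in> F" "(p (Suc j), q (Suc j)) \<in> F" using F_eq j by auto
    from disj[OF this] lt have "q j < p (Suc j) \<or> q (Suc j) < p j" by simp
    then show ?thesis using lt le[OF j] by linarith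
  qed
  show ?thesis by (rule that[of "card F" p q]) (use le sep F_eq in auto)
qed

lemma Zval_chain:
  fixes p q :: "nat \<Rightarrow> nat"
  assumes "\<And>j. j < k \<Longrightarrow> p j \<le> q j" and "\<And>j. Suc j < k \<Longrightarrow> q j < p (Suc j)"
  shows "Zval x u z ((\<lambda>j. (p j, q j)) ` {..<k})
    = norm (\<Sum>j<k. norm (\<Sum>i\<in>{p j..q j}. z i *\<^sub>R x i) *\<^sub>R u (p j))"
proof -
  have "inj_on (\<lambda>j. (p j, q j)) {..<k}" by (rule interval_family_chain(2)) (use assms in auto)
  then show ?thesis unfolding Zval_def block_norm_def by (subst sum.reindex) simp_all
qed

lemma Znorm_eq_Sup_Zvals: "Znorm x u z = Sup (Zvals x u z)"
proof -
  have chain_in_Zvals: "s \<in> Zvals x u z"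
    if s: "s = norm (\<Sum>j<k. norm (\<Sum>i\<in>{p j..q j}. z i *\<^sub>R x i) *\<^sub>R u (p j))"
      and k: "1 \<le> k" and pq: "\<forall>j<k. p j \<le> q j" "\<forall>j. Suc j < k \<longrightarrow> q j < p (Suc j)"
    for s k p q
  proof -
    have "s = Zval x u z ((\<lambda>j. (p j, q j)) ` {..<k})"
      unfolding s by (rule Zval_chain[symmetric]) (use pq in auto)
    moreover have "interval_family ((\<lambda>j. (p j, q j)) ` {..<k})"
      by (rule interval_family_chain(1)) (use pq in auto)
    moreover have "(\<lambda>j. (p j, q j)) ` {..<k} \<noteq> {}" using k by (auto simp: lessThan_empty_iff)
    ultimately show ?thesis unfolding Zvals_def by blast
  qed
  have Zvals_chain: "\<exists>k p q. s = norm (\<Sum>j<k. norm (\<Sum>i\<in>{p j..q j}. z i *\<^sub>R x i) *\<^sub>R u (p j))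
      \<and> 1 \<le> k \<and> (\<forall>j<k. p j \<le> q j) \<and> (\<forall>j. Suc j < k \<longrightarrow> q j < p (Suc j))"
    if s: "s \<in> Zvals x u z" for s
  proof -
    obtain F where F: "interval_family F" "F \<noteq> {}" "s = Zval x u z F"
      using s unfolding Zvals_def by blast
    obtain k p q where pq: "\<And>j. j < k \<Longrightarrow> p j \<le> q j" "\<And>j. Suc j < k \<Longrightarrow> q j < p (Suc j)"
      and F_eq: "F = (\<lambda>j. (p j, q j)) ` {..<k}" and k: "k = card F"
      using interval_family_enumeration[OF F(1)] by blast
    have "1 \<le> k" using F(1,2) k unfolding interval_family_def by (simp add: Suc_le_eq card_gt_0_iff)
    moreover have "s = norm (\<Sum>j<k. norm (\<Sum>i\<in>{p j..q j}. z i *\<^sub>R x i) *\<^sub>R u (p j))"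
      unfolding F(3) F_eq by (rule Zval_chain) (use pq in auto)
    ultimately show ?thesis using pq by blast
  qed
  show ?thesis
    unfolding Znorm_def
    by (rule arg_cong[where f = Sup], rule set_eqI, rule iffI) (use chain_in_Zvals Zvals_chain in blast)+
qed

lemma block_norm_scale: "block_norm x (\<lambda>i. c * z i) I = \<bar>c\<bar> * block_norm x z I"
  unfolding block_norm_def by (simp flip: scaleR_scaleR scaleR_sum_right)

lemma Zval_scale: "Zval x u (\<lambda>i. c * z i) F = \<bar>c\<bar> * Zval x u z F"
  unfolding Zval_def by (simp add: block_norm_scale flip: scaleR_scaleR scaleR_sum_right)

lemma Zvals_nonempty: "Zvals x u z \<noteq> {}"
proof -
  have "interval_family {(0, 0)}" unfolding interval_family_def by simp
  then show ?thesis unfolding Zvals_def by blast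
qed

locale Zspace =
  fixes x :: "nat \<Rightarrow> 'a::real_normed_vector" and u :: "nat \<Rightarrow> 'b::real_normed_vector"
  assumes norm_x: "\<And>n. norm (x n) = 1" and norm_u: "\<And>n. norm (u n) = 1"
begin

lemma Zval_le_sum_abs:
  assumes F: "interval_family F" and supp: "\<forall>i\<ge>N. z i = 0"
  shows "Zval x u z F \<le> (\<Sum>i<N. \<bar>z i\<bar>)"
proof -
  have fin: "finite F" using F unfolding interval_family_def by simp
  have "Zval x u z F \<le> (\<Sum>I\<in>F. norm (block_norm x z I *\<^sub>R u (fst I)))"
    unfolding Zval_def by (rule norm_sum)
  also have "\<dots> \<le> (\<Sum>I\<in>F. \<Sum>i\<in>{fst I..snd I}. \<bar>z i\<bar>)"
  proof (rule sum_mono)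
    fix I
    have "block_norm x z I \<le> (\<Sum>i\<in>{fst I..snd I}. norm (z i *\<^sub>R x i))"
      unfolding block_norm_def by (rule norm_sum)
    then show "norm (block_norm x z I *\<^sub>R u (fst I)) \<le> (\<Sum>i\<in>{fst I..snd I}. \<bar>z i\<bar>)"
      by (simp add: norm_x norm_u block_norm_def)
  qed
  also have "\<dots> = (\<Sum>i\<in>(\<Union>I\<in>F. {fst I..snd I}). \<bar>z i\<bar>)"
    using F fin unfolding interval_family_def
    by (intro sum.UNION_disjoint[symmetric]) fastforce+
  also have "\<dots> \<le> (\<Sum>i\<in>(\<Union>I\<in>F. {fst I..snd I}) \<union> {..<N}. \<bar>z i\<bar>)"
    using fin by (intro sum_mono2) auto
  also have "\<dots> = (\<Sum>i<N. \<bar>z i\<bar>)"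
    using fin supp by (intro sum.mono_neutral_right) auto
  finally show ?thesis .
qed

lemma bdd_above_Zvals: "\<forall>i\<ge>N. z i = 0 \<Longrightarrow> bdd_above (Zvals x u z)"
  unfolding Zvals_def using Zval_le_sum_abs by (intro bdd_aboveI) blast

lemma Znorm_nonneg:
  assumes "\<forall>i\<ge>N. z i = 0"
  shows "0 \<le> Znorm x u z"
proof -
  have "interval_family {(0, 0)}" unfolding interval_family_def by simp
  then have "Zval x u z {(0, 0)} \<in> Zvals x u z" unfolding Zvals_def by blast
  then have "Zval x u z {(0, 0)} \<le> Znorm x u z"
    unfolding Znorm_eq_Sup_Zvals using bdd_above_Zvals[OF assms] by (rule cSup_upper)
  then show ?thesis unfolding Zval_def by (meson norm_ge_zero order_trans)
qed

lemma Zval_le_Znorm: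
  assumes F: "interval_family F" and supp: "\<forall>i\<ge>N. z i = 0"
  shows "Zval x u z F \<le> Znorm x u z"
proof (cases "F = {}")
  case True
  then show ?thesis using Znorm_nonneg[OF supp] by (simp add: Zval_def)
next
  case False
  then have "Zval x u z F \<in> Zvals x u z" using F unfolding Zvals_def by blast
  then show ?thesis unfolding Znorm_eq_Sup_Zvals using bdd_above_Zvals[OF supp] by (rule cSup_upper)
qed

lemma Znorm_le_sum_abs: "\<forall>i\<ge>N. z i = 0 \<Longrightarrow> Znorm x u z \<le> (\<Sum>i<N. \<bar>z i\<bar>)"
  unfolding Znorm_eq_Sup_Zvals using Zval_le_sum_abs
  by (intro cSup_least[OF Zvals_nonempty]) (auto simp: Zvals_def)

lemma abs_le_Znorm:
  assumes "\<forall>i\<ge>N. z i = 0"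
  shows "\<bar>z i\<bar> \<le> Znorm x u z"
proof -
  have "interval_family {(i, i)}" unfolding interval_family_def by simp
  moreover have "Zval x u z {(i, i)} = \<bar>z i\<bar>"
    unfolding Zval_def block_norm_def by (simp add: norm_x norm_u)
  ultimately show ?thesis using Zval_le_Znorm[OF _ assms] by fastforce
qed

lemma Znorm_scale_le:
  assumes "\<forall>i\<ge>N. z i = 0"
  shows "Znorm x u (\<lambda>i. c * z i) \<le> \<bar>c\<bar> * Znorm x u z"
  unfolding Znorm_eq_Sup_Zvals[of x u "\<lambda>i. c * z i"]
proof (rule cSup_least[OF Zvals_nonempty])
  fix s assume "s \<in> Zvals x u (\<lambda>i. c * z i)"
  then obtain F where "interval_family F" "s = \<bar>c\<bar> * Zval x u z F"
    unfolding Zvals_def Zval_scale by blast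
  then show "s \<le> \<bar>c\<bar> * Znorm x u z" using Zval_le_Znorm[OF _ assms] by (simp add: mult_left_mono)
qed

end

section \<open>Unconditional and Schauder bases\<close>

lemma unconditional1_norm_sum_subset:
  fixes u :: "nat \<Rightarrow> 'b::real_normed_vector"
  assumes unc: "unconditional1 u" and fin: "finite A" and BA: "B \<subseteq> A"
  shows "norm (\<Sum>i\<in>B. \<beta> i *\<^sub>R u i) \<le> norm (\<Sum>i\<in>A. \<beta> i *\<^sub>R u i)"
proof -
  obtain n where A_n: "A \<subseteq> {..<n}" using finite_nat_bounded[OF fin] by blast
  define a where "a i = (if i \<in> A then \<beta> i else 0)" for i
  define \<epsilon> where "\<epsilon> i = (if i \<in> B then 1 else -1::real)" for i
  have restrict: "(\<Sum>i<n. (c i * a i) *\<^sub>R u i) = (\<Sum>i\<in>A. (c i * \<beta> i) *\<^sub>R u i)" for c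
  proof -
    have "(\<Sum>i<n. (c i * a i) *\<^sub>R u i) = (\<Sum>i\<in>{..<n} \<inter> A. (c i * \<beta> i) *\<^sub>R u i)"
      unfolding a_def sum.inter_restrict[OF finite_lessThan] by (rule sum.cong) auto
    also have "{..<n} \<inter> A = A" using A_n by blast
    finally show ?thesis .
  qed
  have signs: "(\<Sum>i\<in>A. (\<epsilon> i * \<beta> i) *\<^sub>R u i) = (\<Sum>i\<in>B. \<beta> i *\<^sub>R u i) - (\<Sum>i\<in>A - B. \<beta> i *\<^sub>R u i)"
    using sum.subset_diff[OF BA fin, of "\<lambda>i. (\<epsilon> i * \<beta> i) *\<^sub>R u i"]
    unfolding \<epsilon>_def by (simp add: sum_negf)
  have "norm (\<Sum>i<n. (\<epsilon> i * a i) *\<^sub>R u i) = norm (\<Sum>i<n. a i *\<^sub>R u i)"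
    using unc unfolding unconditional1_def \<epsilon>_def by simp
  then have same_norm: "norm (\<Sum>i\<in>A. (\<epsilon> i * \<beta> i) *\<^sub>R u i) = norm (\<Sum>i\<in>A. \<beta> i *\<^sub>R u i)"
    using restrict[of \<epsilon>] restrict[of "\<lambda>_. 1"] by simp
  \<comment> \<open>Flipping the signs off B and averaging with the original sum isolates the part on B.\<close>
  have "(\<Sum>i\<in>B. \<beta> i *\<^sub>R u i)
      = (1/2) *\<^sub>R ((\<Sum>i\<in>A. \<beta> i *\<^sub>R u i) + (\<Sum>i\<in>A. (\<epsilon> i * \<beta> i) *\<^sub>R u i))"
    unfolding signs sum.subset_diff[OF BA fin, of "\<lambda>i. \<beta> i *\<^sub>R u i"]
    by (simp add: algebra_simps flip: scaleR_add_left)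
  also have "norm \<dots> \<le> (1/2) * (norm (\<Sum>i\<in>A. \<beta> i *\<^sub>R u i) + norm (\<Sum>i\<in>A. (\<epsilon> i * \<beta> i) *\<^sub>R u i))"
    by (simp add: norm_triangle_ineq)
  finally show ?thesis unfolding same_norm by simp
qed

lemma unconditional1_norm_sum_subset_inj:
  fixes u :: "nat \<Rightarrow> 'b::real_normed_vector"
  assumes unc: "unconditional1 u" and fin: "finite A" and inj: "inj_on f A" and BA: "B \<subseteq> A"
  shows "norm (\<Sum>h\<in>B. \<gamma> h *\<^sub>R u (f h)) \<le> norm (\<Sum>h\<in>A. \<gamma> h *\<^sub>R u (f h))"
proof -
  define \<beta> where "\<beta> i = \<gamma> (inv_into A f i)" for i
  have reindex: "(\<Sum>h\<in>C. \<gamma> h *\<^sub>R u (f h)) = (\<Sum>i\<in>f ` C. \<beta> i *\<^sub>R u i)" if "C \<subseteq> A" for C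
  proof -
    have "(\<Sum>i\<in>f ` C. \<beta> i *\<^sub>R u i) = (\<Sum>h\<in>C. \<beta> (f h) *\<^sub>R u (f h))"
      using inj_on_subset[OF inj that] by (simp add: sum.reindex)
    also have "\<dots> = (\<Sum>h\<in>C. \<gamma> h *\<^sub>R u (f h))"
      using that inv_into_f_f[OF inj] unfolding \<beta>_def by (intro sum.cong) auto
    finally show ?thesis by simp
  qed
  show ?thesis unfolding reindex[OF BA] reindex[OF order_refl]
    using fin BA by (intro unconditional1_norm_sum_subset[OF unc]) auto
qed

lemma unconditional1_norm_sum_relocate_one:
  fixes u :: "nat \<Rightarrow> 'b::real_normed_vector"
  assumes unc: "unconditional1 u" and norm_u: "\<And>n. norm (u n) = 1"
    and fin: "finite A" and inj: "inj_on f A" and g: "\<And>h. h \<in> A - {h0} \<Longrightarrow> g h = f h"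
  shows "norm (\<Sum>h\<in>A. \<gamma> h *\<^sub>R u (g h)) \<le> 2 * norm (\<Sum>h\<in>A. \<gamma> h *\<^sub>R u (f h))"
proof (cases "h0 \<in> A")
  case False
  then have "(\<Sum>h\<in>A. \<gamma> h *\<^sub>R u (g h)) = (\<Sum>h\<in>A. \<gamma> h *\<^sub>R u (f h))"
    using g by (intro sum.cong) auto
  then show ?thesis by simp
next
  case True
  let ?S = "\<lambda>C. \<Sum>h\<in>C. \<gamma> h *\<^sub>R u (f h)"
  have "(\<Sum>h\<in>A. \<gamma> h *\<^sub>R u (g h)) = \<gamma> h0 *\<^sub>R u (g h0) + (\<Sum>h\<in>A - {h0}. \<gamma> h *\<^sub>R u (g h))"
    by (rule sum.remove[OF fin True])
  also have "(\<Sum>h\<in>A - {h0}. \<gamma> h *\<^sub>R u (g h)) = ?S (A - {h0})"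
    using g by (intro sum.cong) auto
  finally have "norm (\<Sum>h\<in>A. \<gamma> h *\<^sub>R u (g h)) \<le> norm (?S {h0}) + norm (?S (A - {h0}))"
    using norm_triangle_ineq[of "\<gamma> h0 *\<^sub>R u (g h0)"] by (simp add: norm_u)
  also have "\<dots> \<le> norm (?S A) + norm (?S A)"
    using True by (intro add_mono unconditional1_norm_sum_subset_inj[OF unc fin inj]) auto
  finally show ?thesis by simp
qed

lemma coord_finite_sum:
  fixes u :: "nat \<Rightarrow> 'b::real_normed_vector"
  assumes basis: "schauder_basis u" and fin: "finite A"
  shows "coord u (\<Sum>i\<in>A. \<beta> i *\<^sub>R u i) = (\<lambda>i. if i \<in> A then \<beta> i else 0)"
proof -
  have "(\<lambda>n. (if n \<in> A then \<beta> n else 0) *\<^sub>R u n) sums (\<Sum>i\<in>A. \<beta> i *\<^sub>R u i)"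
    using sums_finite[OF fin, of "\<lambda>n. (if n \<in> A then \<beta> n else 0) *\<^sub>R u n"] by simp
  moreover have "\<exists>!a. (\<lambda>n. a n *\<^sub>R u n) sums (\<Sum>i\<in>A. \<beta> i *\<^sub>R u i)"
    using basis unfolding schauder_basis_def by blast
  ultimately show ?thesis unfolding coord_def by (intro the1_equality) auto
qed

lemma supp_finite_sum:
  fixes u :: "nat \<Rightarrow> 'b::real_normed_vector"
  assumes "schauder_basis u" and "finite A"
  shows "supp u (\<Sum>i\<in>A. \<beta> i *\<^sub>R u i) = {i\<in>A. \<beta> i \<noteq> 0}"
  unfolding supp_def coord_finite_sum[OF assms] by auto

section \<open>Restriction to a window\<close>

definition window :: "nat \<Rightarrow> nat \<Rightarrow> (nat \<Rightarrow> real) \<Rightarrow> nat \<Rightarrow> real" where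
  "window l r z i = (if l \<le> i \<and> i < r then z i else 0)"

definition clip :: "nat \<Rightarrow> nat \<Rightarrow> nat \<times> nat \<Rightarrow> nat \<times> nat" where
  "clip l r I = (max (fst I) l, min (snd I) (r - 1))"

lemma block_norm_window:
  assumes "l < r"
  shows "block_norm x (window l r z) I = block_norm x z (clip l r I)"
proof -
  have "(\<Sum>i\<in>{fst I..snd I}. window l r z i *\<^sub>R x i) = (\<Sum>i\<in>{fst I..snd I} \<inter> {l..<r}. z i *\<^sub>R x i)"
    unfolding sum.inter_restrict[OF finite_atLeastAtMost] window_def by (rule sum.cong) auto
  also have "{fst I..snd I} \<inter> {l..<r} = {fst (clip l r I)..snd (clip l r I)}"
    using assms unfolding clip_def by auto
  finally show ?thesis unfolding block_norm_def by simp
qed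

lemma block_norm_window_disjoint:
  assumes "\<not> (fst I < r \<and> l \<le> snd I)"
  shows "block_norm x (window l r z) I = 0"
  unfolding block_norm_def window_def using assms by (auto intro!: sum.neutral)

lemma interval_family_clip:
  assumes F: "interval_family F" and "l < r"
  defines "G \<equiv> {I\<in>F. fst I < r \<and> l \<le> snd I}"
  shows "interval_family (clip l r ` G)" and "inj_on (\<lambda>I. fst (clip l r I)) G"
    and "\<And>J. J \<in> clip l r ` G \<Longrightarrow> l \<le> fst J \<and> snd J < r"
proof -
  have inside: "fst (clip l r I) \<le> snd (clip l r I)" "l \<le> fst (clip l r I)" "snd (clip l r I) < r"
    if "I \<in> G" for I
    using that F \<open>l < r\<close> unfolding G_def clip_def interval_family_def by auto
  have sep: "snd (clip l r I) < fst (clip l r J) \<or> snd (clip l r J) < fst (clip l r I)"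
    if "I \<in> G" "J \<in> G" "I \<noteq> J" for I J
  proof -
    have "snd I < fst J \<or> snd J < fst I"
      using that F unfolding G_def interval_family_def by blast
    moreover have "snd (clip l r K) \<le> snd K" "fst K \<le> fst (clip l r K)" for K
      unfolding clip_def by auto
    ultimately show ?thesis by (meson le_less_trans less_le_trans)
  qed
  show "inj_on (\<lambda>I. fst (clip l r I)) G"
  proof (rule inj_onI, rule ccontr)
    fix I J assume "I \<in> G" "J \<in> G" "fst (clip l r I) = fst (clip l r J)" "I \<noteq> J"
    then show False using sep[of I J] inside(1)[of I] inside(1)[of J] by linarith
  qed
  show "interval_family (clip l r ` G)"
    unfolding interval_family_def
  proof (intro conjI ballI impI)
    show "finite (clip l r ` G)" using F unfolding G_def interval_family_def by simp
    show "fst J \<le> snd J" if "J \<in> clip l r ` G" for J using that inside(1) by blast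
    show "snd J < fst J' \<or> snd J' < fst J"
      if "J \<in> clip l r ` G" "J' \<in> clip l r ` G" "J \<noteq> J'" for J J'
      using that sep by blast
  qed
  show "\<And>J. J \<in> clip l r ` G \<Longrightarrow> l \<le> fst J \<and> snd J < r" using inside by blast
qed

lemma interval_family_one_straddles:
  assumes F: "interval_family F"
  obtains I0 where "\<And>I. I \<in> F - {I0} \<Longrightarrow> l \<le> snd I \<Longrightarrow> l \<le> fst I"
proof (cases "\<exists>I0\<in>F. fst I0 < l \<and> l \<le> snd I0")
  case True
  then obtain I0 where I0: "I0 \<in> F" "fst I0 < l" "l \<le> snd I0" by blast
  have "l \<le> fst I" if I: "I \<in> F - {I0}" "l \<le> snd I" for I
  proof (rule ccontr)
    assume "\<not> l \<le> fst I"
    moreover have "snd I < fst I0 \<or> snd I0 < fst I"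
      using F I0(1) I unfolding interval_family_def by blast
    ultimately show False using I0(2,3) I(2) by linarith
  qed
  then show ?thesis using that by blast
next
  case False
  show ?thesis
  proof (rule that)
    fix I assume "I \<in> F - {(0, 0)}" "l \<le> snd I"
    then show "l \<le> fst I" using False by (meson DiffD1 not_le)
  qed
qed

locale Zspace_unconditional = Zspace +
  assumes unconditional: "unconditional1 u"
begin

lemma Zval_window_le:
  assumes F: "interval_family F" and lr: "l < r"
  obtains F' where "interval_family F'" and "\<And>J. J \<in> F' \<Longrightarrow> l \<le> fst J \<and> snd J < r"
    and "Zval x u (window l r z) F \<le> 2 * Zval x u z F'"
proof -
  define G where "G = {I\<in>F. fst I < r \<and> l \<le> snd I}"
  note clip_G = interval_family_clip[OF F lr, folded G_def]
  obtain I0 where I0: "\<And>I. I \<in> F - {I0} \<Longrightarrow> l \<le> snd I \<Longrightarrow> l \<le> fst I"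
    using interval_family_one_straddles[OF F] by blast
  have fin: "finite F" using F unfolding interval_family_def by simp
  let ?c = "\<lambda>I. block_norm x z (clip l r I)"
  have "Zval x u (window l r z) F = norm (\<Sum>I\<in>G. ?c I *\<^sub>R u (fst I))"
  proof -
    have "(\<Sum>I\<in>F. block_norm x (window l r z) I *\<^sub>R u (fst I))
        = (\<Sum>I\<in>G. block_norm x (window l r z) I *\<^sub>R u (fst I))"
      using fin unfolding G_def
      by (intro sum.mono_neutral_right) (auto simp: block_norm_window_disjoint)
    then show ?thesis unfolding Zval_def block_norm_window[OF lr] by simp
  qed
  \<comment> \<open>Only the interval straddling l loses its left end point when clipped.\<close>
  also have "\<dots> \<le> 2 * norm (\<Sum>I\<in>G. ?c I *\<^sub>R u (fst (clip l r I)))"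
  proof (rule unconditional1_norm_sum_relocate_one[OF unconditional norm_u _ clip_G(2)])
    show "finite G" using fin unfolding G_def by simp
    show "fst I = fst (clip l r I)" if "I \<in> G - {I0}" for I
      using that I0[of I] unfolding G_def clip_def by auto
  qed
  also have "\<dots> = 2 * Zval x u z (clip l r ` G)"
  proof -
    have "inj_on (clip l r) G"
      by (rule inj_on_imageI2[of fst]) (use clip_G(2) in \<open>simp add: comp_def\<close>)
    then show ?thesis unfolding Zval_def by (simp add: sum.reindex)
  qed
  finally show ?thesis using that clip_G(1,3) by blast
qed

lemma Znorm_window_le:
  assumes supp: "\<forall>i\<ge>N. z i = 0" and lr: "l < r"
  shows "Znorm x u (window l r z) \<le> 2 * Znorm x u z"
  unfolding Znorm_eq_Sup_Zvals[of x u "window l r z"]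
proof (rule cSup_least[OF Zvals_nonempty])
  fix s assume "s \<in> Zvals x u (window l r z)"
  then obtain F where F: "interval_family F" "s = Zval x u (window l r z) F"
    unfolding Zvals_def by blast
  obtain F' where "interval_family F'" "s \<le> 2 * Zval x u z F'"
    using Zval_window_le[OF F(1) lr] F(2) by metis
  then show "s \<le> 2 * Znorm x u z" using Zval_le_Znorm[OF _ supp] by fastforce
qed

end

section \<open>The Tsirelson lower estimate\<close>

definition tsirelson_const :: "(nat \<Rightarrow> 'b::real_normed_vector) \<Rightarrow> real \<Rightarrow> bool" where
  "tsirelson_const u C \<longleftrightarrow> (\<forall>n v.
     (\<forall>j\<in>{1..n}. norm (v j) = 1 \<and> finite (supp u (v j)) \<and> supp u (v j) \<noteq> {})
     \<and> (\<forall>j. 1 \<le> j \<and> j < n \<longrightarrow> Max (supp u (v j)) < Min (supp u (v (Suc j))))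
     \<and> n \<le> Min (supp u (v 1)) + 1
     \<longrightarrow> (\<forall>a. (1 / C) * (\<Sum>j=1..n. \<bar>a j\<bar>) \<le> norm (\<Sum>j=1..n. a j *\<^sub>R v j)
              \<and> norm (\<Sum>j=1..n. a j *\<^sub>R v j) \<le> C * (\<Sum>j=1..n. \<bar>a j\<bar>)))"

lemma tsirelson_iff_const: "tsirelson u \<longleftrightarrow> (\<exists>C>0. tsirelson_const u C)"
  unfolding tsirelson_def tsirelson_const_def by simp

lemma normalized_block:
  fixes u :: "nat \<Rightarrow> 'b::real_normed_vector"
  assumes basis: "schauder_basis u" and norm_u: "\<And>n. norm (u n) = 1" and ab: "a < b"
    and w: "w = (\<Sum>k\<in>{a..<b}. c k *\<^sub>R u k)"
  defines "v \<equiv> if w = 0 then u a else (1 / norm w) *\<^sub>R w"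
  shows "norm v = 1" and "norm w *\<^sub>R v = w"
    and "finite (supp u v)" and "supp u v \<noteq> {}" and "supp u v \<subseteq> {a..<b}"
proof -
  show "norm v = 1" unfolding v_def using norm_u by simp
  show "norm w *\<^sub>R v = w" unfolding v_def by simp
  have "\<exists>d. v = (\<Sum>k\<in>{a..<b}. d k *\<^sub>R u k)"
  proof (cases "w = 0")
    case True
    then have "v = (\<Sum>k\<in>{a..<b}. (if k = a then 1 else 0) *\<^sub>R u k)"
      using ab unfolding v_def by (simp add: if_distrib[of "\<lambda>t. t *\<^sub>R _"] cong: if_cong)
    then show ?thesis by (rule exI[of _ "\<lambda>k. if k = a then 1 else 0"])
  next
    case False
    then have "v = (\<Sum>k\<in>{a..<b}. (c k / norm w) *\<^sub>R u k)"
      unfolding v_def w by (simp add: scaleR_sum_right)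
    then show ?thesis by (rule exI[of _ "\<lambda>k. c k / norm w"])
  qed
  then obtain d where d: "v = (\<Sum>k\<in>{a..<b}. d k *\<^sub>R u k)" by blast
  have supp: "supp u v = {k\<in>{a..<b}. d k \<noteq> 0}"
    unfolding d by (rule supp_finite_sum[OF basis finite_atLeastLessThan])
  show "finite (supp u v)" "supp u v \<subseteq> {a..<b}" unfolding supp by auto
  show "supp u v \<noteq> {}"
  proof
    assume "supp u v = {}"
    then have "\<forall>k\<in>{a..<b}. d k = 0" unfolding supp by auto
    then have "v = 0" unfolding d by simp
    then show False using \<open>norm v = 1\<close> by simp
  qed
qed

lemma tsirelson_const_lower_estimate:
  fixes u :: "nat \<Rightarrow> 'b::real_normed_vector"
  assumes T: "tsirelson_const u C" and C: "0 < C"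
    and v: "\<And>j. j < K \<Longrightarrow> norm (v j) = 1 \<and> finite (supp u (v j)) \<and> supp u (v j) \<noteq> {}"
    and successive: "\<And>j. Suc j < K \<Longrightarrow> Max (supp u (v j)) < Min (supp u (v (Suc j)))"
    and late_start: "0 < K \<Longrightarrow> K \<le> Min (supp u (v 0)) + 1"
  shows "(\<Sum>j<K. \<bar>a j\<bar>) \<le> C * norm (\<Sum>j<K. a j *\<^sub>R v j)"
proof -
  \<comment> \<open>The Tsirelson property indexes blocks from 1.\<close>
  define v' where "v' j = v (j - 1)" for j
  have "\<forall>j\<in>{1..K}. norm (v' j) = 1 \<and> finite (supp u (v' j)) \<and> supp u (v' j) \<noteq> {}"
    unfolding v'_def using v by force
  moreover have "\<forall>j. 1 \<le> j \<and> j < K \<longrightarrow> Max (supp u (v' j)) < Min (supp u (v' (Suc j)))"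
    unfolding v'_def using successive by (metis Suc_diff_1 diff_Suc_1 less_le_trans zero_less_one)
  moreover have "K \<le> Min (supp u (v' 1)) + 1"
    unfolding v'_def using late_start by (cases "K = 0") auto
  ultimately have "\<forall>a. (1 / C) * (\<Sum>j=1..K. \<bar>a j\<bar>) \<le> norm (\<Sum>j=1..K. a j *\<^sub>R v' j)
      \<and> norm (\<Sum>j=1..K. a j *\<^sub>R v' j) \<le> C * (\<Sum>j=1..K. \<bar>a j\<bar>)"
    using T unfolding tsirelson_const_def by blast
  from conjunct1[OF spec[OF this, of "\<lambda>j. a (j - 1)"]]
  have "(1 / C) * (\<Sum>j<K. \<bar>a j\<bar>) \<le> norm (\<Sum>j<K. a j *\<^sub>R v j)"
    unfolding v'_def by (simp add: sum.atLeast1_atMost_eq)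
  then show ?thesis using C by (simp add: field_simps)
qed

lemma tsirelson_block_lower_estimate:
  fixes u :: "nat \<Rightarrow> 'b::real_normed_vector"
  assumes basis: "schauder_basis u" and norm_u: "\<And>n. norm (u n) = 1"
    and T: "tsirelson_const u C" and C: "0 < C"
    and e: "\<And>j. j < K \<Longrightarrow> e j < e (Suc j)" and K_e: "K \<le> e 0"
    and w: "\<And>j. j < K \<Longrightarrow> \<exists>c. w j = (\<Sum>k\<in>{e j..<e (Suc j)}. c k *\<^sub>R u k)"
  shows "(\<Sum>j<K. norm (w j)) \<le> C * norm (\<Sum>j<K. w j)"
proof -
  define v where "v j = (if w j = 0 then u (e j) else (1 / norm (w j)) *\<^sub>R w j)" for j
  have block: "norm (v j) = 1" "norm (w j) *\<^sub>R v j = w j"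
    "finite (supp u (v j))" "supp u (v j) \<noteq> {}" "supp u (v j) \<subseteq> {e j..<e (Suc j)}"
    if j: "j < K" for j
  proof -
    obtain c where "w j = (\<Sum>k\<in>{e j..<e (Suc j)}. c k *\<^sub>R u k)" using w[OF j] by blast
    from normalized_block[OF basis norm_u e[OF j] this]
    show "norm (v j) = 1" "norm (w j) *\<^sub>R v j = w j"
      "finite (supp u (v j))" "supp u (v j) \<noteq> {}" "supp u (v j) \<subseteq> {e j..<e (Suc j)}"
      unfolding v_def by blast+
  qed
  have "(\<Sum>j<K. \<bar>norm (w j)\<bar>) \<le> C * norm (\<Sum>j<K. norm (w j) *\<^sub>R v j)"
  proof (rule tsirelson_const_lower_estimate[OF T C])
    show "norm (v j) = 1 \<and> finite (supp u (v j)) \<and> supp u (v j) \<noteq> {}" if "j < K" for j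
      using block(1,3,4)[OF that] by blast
    show "Max (supp u (v j)) < Min (supp u (v (Suc j)))" if j: "Suc j < K" for j
    proof -
      have "j < K" using j by simp
      then have "Max (supp u (v j)) < e (Suc j)"
        using Max_in[OF block(3,4)] block(5) by fastforce
      also have "e (Suc j) \<le> Min (supp u (v (Suc j)))"
        using Min_in[OF block(3,4)[OF j]] block(5)[OF j] by fastforce
      finally show ?thesis .
    qed
    show "K \<le> Min (supp u (v 0)) + 1" if "0 < K"
      using Min_in[OF block(3,4)[OF that]] block(5)[OF that] K_e by fastforce
  qed
  moreover have "(\<Sum>j<K. norm (w j) *\<^sub>R v j) = (\<Sum>j<K. w j)" using block(2) by (intro sum.cong) auto
  ultimately show ?thesis by simp
qed

lemma interval_family_sum_in_window:
  fixes u :: "nat \<Rightarrow> 'b::real_vector"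
  assumes F: "interval_family F" and win: "\<And>I. I \<in> F \<Longrightarrow> a \<le> fst I \<and> fst I < b"
  shows "\<exists>c. (\<Sum>I\<in>F. \<gamma> I *\<^sub>R u (fst I)) = (\<Sum>k\<in>{a..<b}. c k *\<^sub>R u k)"
proof -
  have inj: "inj_on fst F" by (rule interval_family_inj_fst[OF F])
  define c where "c k = (if k \<in> fst ` F then \<gamma> (inv_into F fst k) else 0)" for k
  have "(\<Sum>k\<in>{a..<b}. c k *\<^sub>R u k) = (\<Sum>k\<in>fst ` F. c k *\<^sub>R u k)"
    using win unfolding c_def by (intro sum.mono_neutral_right) auto
  also have "\<dots> = (\<Sum>I\<in>F. \<gamma> I *\<^sub>R u (fst I))"
    unfolding sum.reindex[OF inj] c_def using inv_into_f_f[OF inj] by (intro sum.cong) auto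
  finally show ?thesis by (intro exI[of _ c]) simp
qed

lemma interval_family_UN_windows:
  fixes e :: "nat \<Rightarrow> nat"
  assumes e: "\<And>j. j < K \<Longrightarrow> e j < e (Suc j)"
    and F: "\<And>j. j < K \<Longrightarrow> interval_family (F j)"
    and win: "\<And>j I. j < K \<Longrightarrow> I \<in> F j \<Longrightarrow> e j \<le> fst I \<and> snd I < e (Suc j)"
  shows "interval_family (\<Union>j<K. F j)"
    and "\<forall>j\<in>{..<K}. \<forall>j'\<in>{..<K}. j \<noteq> j' \<longrightarrow> F j \<inter> F j' = {}"
proof -
  have sep: "snd I < fst J" if "j < j'" "j' < K" "I \<in> F j" "J \<in> F j'" for j j' I J
  proof -
    have "snd I < e (Suc j)" using win that by auto
    also have "e (Suc j) \<le> e j'"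
    proof -
      have "e n \<le> e (Suc n)" if "n \<in> {..<K}" for n using e[of n] that by simp
      moreover have "{Suc j..<j'} \<subseteq> {..<K}" using that by auto
      ultimately show ?thesis using lift_Suc_mono_le_ivl[of "{..<K}" e "Suc j" j'] that(1) by simp
    qed
    also have "e j' \<le> fst J" using win that by auto
    finally show ?thesis .
  qed
  have ordered: "fst I \<le> snd I" if "j < K" "I \<in> F j" for j I
    using F that unfolding interval_family_def by blast
  show "\<forall>j\<in>{..<K}. \<forall>j'\<in>{..<K}. j \<noteq> j' \<longrightarrow> F j \<inter> F j' = {}"
  proof (intro ballI impI equals0I)
    fix j j' I assume j: "j \<in> {..<K}" "j' \<in> {..<K}" "j \<noteq> j'" and I: "I \<in> F j \<inter> F j'"
    then have "fst I \<le> snd I" using ordered by auto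
    moreover have "snd I < fst I"
      using j I sep[of j j' I I] sep[of j' j I I] by (cases "j < j'") auto
    ultimately show False by simp
  qed
  show "interval_family (\<Union>j<K. F j)"
    unfolding interval_family_def
  proof (intro conjI ballI impI)
    show "finite (\<Union>j<K. F j)" using F unfolding interval_family_def by simp
    show "fst I \<le> snd I" if "I \<in> (\<Union>j<K. F j)" for I using that ordered by blast
    fix I J assume I: "I \<in> (\<Union>j<K. F j)" and J: "J \<in> (\<Union>j<K. F j)" and "I \<noteq> J"
    then obtain i j where ij: "i < K" "j < K" "I \<in> F i" "J \<in> F j" by blast
    consider "i < j" | "i = j" | "j < i" by linarith
    then show "snd I < fst J \<or> snd J < fst I"
    proof cases
      case 1
      then show ?thesis using sep[of i j I J] ij by simp
    next
      case 2
      then show ?thesis using F[of i] ij \<open>I \<noteq> J\<close> unfolding interval_family_def by blast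
    next
      case 3
      then show ?thesis using sep[of j i J I] ij by simp
    qed
  qed
qed

lemma sum_cSup_le:
  fixes S :: "nat \<Rightarrow> real set"
  assumes ne: "\<And>j. j < K \<Longrightarrow> S j \<noteq> {}" and bdd: "\<And>j. j < K \<Longrightarrow> bdd_above (S j)"
    and le: "\<And>f. (\<And>j. j < K \<Longrightarrow> f j \<in> S j) \<Longrightarrow> (\<Sum>j<K. f j) \<le> B"
  shows "(\<Sum>j<K. Sup (S j)) \<le> B"
proof (rule field_le_epsilon)
  fix \<epsilon> :: real assume \<epsilon>: "0 < \<epsilon>"
  define d where "d = \<epsilon> / (real K + 1)"
  have d: "0 < d" unfolding d_def using \<epsilon> by simp
  have "\<exists>s\<in>S j. Sup (S j) - d < s" if "j < K" for j
    using less_cSup_iff[OF ne[OF that] bdd[OF that], of "Sup (S j) - d"] d by simp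
  then have "\<forall>j. \<exists>s. j < K \<longrightarrow> s \<in> S j \<and> Sup (S j) - d < s" by blast
  from choice[OF this] obtain f where f: "\<forall>j. j < K \<longrightarrow> f j \<in> S j \<and> Sup (S j) - d < f j"
    by blast
  have "(\<Sum>j<K. Sup (S j)) \<le> (\<Sum>j<K. f j + d)"
  proof (rule sum_mono)
    fix j assume "j \<in> {..<K}"
    then have "Sup (S j) - d < f j" using f by blast
    then show "Sup (S j) \<le> f j + d" by linarith
  qed
  also have "\<dots> = (\<Sum>j<K. f j) + real K * d" by (simp add: sum.distrib)
  also have "(\<Sum>j<K. f j) \<le> B" using f by (intro le) blast
  also have "real K * d \<le> \<epsilon>" unfolding d_def using \<epsilon> by (simp add: field_simps)
  finally show "(\<Sum>j<K. Sup (S j)) \<le> B + \<epsilon>" by simp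
qed

locale Zspace_tsirelson = Zspace_unconditional +
  fixes C :: real
  assumes basis: "schauder_basis u" and tsirelson: "tsirelson_const u C" and C_pos: "0 < C"
begin

lemma sum_Zval_windows_le:
  assumes e: "\<And>j. j < K \<Longrightarrow> e j < e (Suc j)" and K_e: "K \<le> e 0" and supp: "\<forall>i\<ge>N. z i = 0"
    and F: "\<And>j. j < K \<Longrightarrow> interval_family (F j)"
    and win: "\<And>j I. j < K \<Longrightarrow> I \<in> F j \<Longrightarrow> e j \<le> fst I \<and> snd I < e (Suc j)"
  shows "(\<Sum>j<K. Zval x u z (F j)) \<le> C * Znorm x u z"
proof -
  define w where "w j = (\<Sum>I\<in>F j. block_norm x z I *\<^sub>R u (fst I))" for j
  have w_window: "\<exists>c. w j = (\<Sum>k\<in>{e j..<e (Suc j)}. c k *\<^sub>R u k)" if "j < K" for j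
  proof -
    have "fst I < e (Suc j)" if "I \<in> F j" for I
      using win[OF \<open>j < K\<close> that] F[OF \<open>j < K\<close>] that unfolding interval_family_def by fastforce
    then show ?thesis
      unfolding w_def using win[OF \<open>j < K\<close>]
      by (intro interval_family_sum_in_window[OF F[OF \<open>j < K\<close>]]) auto
  qed
  have "(\<Sum>j<K. Zval x u z (F j)) = (\<Sum>j<K. norm (w j))" unfolding Zval_def w_def ..
  also have "\<dots> \<le> C * norm (\<Sum>j<K. w j)"
    by (rule tsirelson_block_lower_estimate[OF basis norm_u tsirelson C_pos e K_e w_window])
  also have "norm (\<Sum>j<K. w j) = Zval x u z (\<Union>j<K. F j)"
    unfolding Zval_def w_def using interval_family_UN_windows(2)[of K e F] e F win
    by (subst sum.UNION_disjoint) (auto simp: interval_family_def)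
  also have "\<dots> \<le> Znorm x u z"
    using interval_family_UN_windows(1)[of K e F] e F win Zval_le_Znorm[OF _ supp] by blast
  finally show ?thesis using C_pos by simp
qed

lemma sum_Znorm_windows_le:
  assumes e: "\<And>j. j < K \<Longrightarrow> e j < e (Suc j)" and K_e: "K \<le> e 0" and supp: "\<forall>i\<ge>N. z i = 0"
  shows "(\<Sum>j<K. Znorm x u (window (e j) (e (Suc j)) z)) \<le> 2 * C * Znorm x u z"
  unfolding Znorm_eq_Sup_Zvals[of x u "window _ _ z"]
proof (rule sum_cSup_le)
  show "Zvals x u (window (e j) (e (Suc j)) z) \<noteq> {}" for j by (rule Zvals_nonempty)
  show "bdd_above (Zvals x u (window (e j) (e (Suc j)) z))" for j
    using supp by (intro bdd_above_Zvals[of N]) (simp add: window_def)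
  fix f assume f: "\<And>j. j < K \<Longrightarrow> f j \<in> Zvals x u (window (e j) (e (Suc j)) z)"
  have "\<forall>j. \<exists>F'. j < K \<longrightarrow> interval_family F' \<and> (\<forall>I\<in>F'. e j \<le> fst I \<and> snd I < e (Suc j))
      \<and> f j \<le> 2 * Zval x u z F'"
  proof
    fix j show "\<exists>F'. j < K \<longrightarrow> interval_family F' \<and> (\<forall>I\<in>F'. e j \<le> fst I \<and> snd I < e (Suc j))
      \<and> f j \<le> 2 * Zval x u z F'"
    proof (cases "j < K")
      case True
      obtain F where F: "interval_family F" "f j = Zval x u (window (e j) (e (Suc j)) z) F"
        using f[OF True] unfolding Zvals_def by blast
      obtain F' where "interval_family F'" "\<And>I. I \<in> F' \<Longrightarrow> e j \<le> fst I \<and> snd I < e (Suc j)"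
        "Zval x u (window (e j) (e (Suc j)) z) F \<le> 2 * Zval x u z F'"
        using Zval_window_le[OF F(1) e[OF True], where z = z] by blast
      then show ?thesis using F(2) by (intro exI[of _ F']) auto
    qed simp
  qed
  from choice[OF this] obtain F' where F': "\<forall>j. j < K \<longrightarrow> interval_family (F' j)
      \<and> (\<forall>I\<in>F' j. e j \<le> fst I \<and> snd I < e (Suc j)) \<and> f j \<le> 2 * Zval x u z (F' j)"
    by blast
  have "(\<Sum>j<K. f j) \<le> (\<Sum>j<K. 2 * Zval x u z (F' j))" using F' by (intro sum_mono) auto
  also have "\<dots> = 2 * (\<Sum>j<K. Zval x u z (F' j))" by (simp add: sum_distrib_left)
  also have "\<dots> \<le> 2 * (C * Znorm x u z)"
    using sum_Zval_windows_le[OF e K_e supp, of F'] F' by simp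
  finally show "(\<Sum>j<K. f j) \<le> 2 * C * Znorm x u z" by simp
qed

end

section \<open>The dual norm and the space Y\<close>

definition tail :: "nat \<Rightarrow> (nat \<Rightarrow> real) \<Rightarrow> nat \<Rightarrow> real" where
  "tail m b i = (if m \<le> i then b i else 0)"

definition tail_subspace :: "(nat \<Rightarrow> 'a::real_normed_vector) \<Rightarrow> (nat \<Rightarrow> 'b::real_normed_vector)
    \<Rightarrow> nat \<Rightarrow> (nat \<Rightarrow> real) set" where
  "tail_subspace x u m = {b \<in> Yspace x u. \<forall>i<m. b i = 0}"

context Zspace
begin

lemma zero_in_dual_set: "0 \<in> dual_set x u b"
proof -
  have "Znorm x u (\<lambda>i. 0) \<le> 0" using Znorm_le_sum_abs[of 0 "\<lambda>i. 0"] by simp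
  then show ?thesis
    unfolding dual_set_def mem_Collect_eq by (intro exI[of _ "\<lambda>i. 0"] exI[of _ 0]) simp
qed

lemma dualnorm_nonneg: "bdd_above (dual_set x u b) \<Longrightarrow> 0 \<le> dualnorm x u b"
  unfolding dualnorm_def by (rule cSup_upper[OF zero_in_dual_set])

lemma dualnorm_least: "(\<And>s. s \<in> dual_set x u b \<Longrightarrow> s \<le> B) \<Longrightarrow> dualnorm x u b \<le> B"
  unfolding dualnorm_def using zero_in_dual_set by (intro cSup_least) auto

lemma abs_pairing_le:
  assumes bdd: "bdd_above (dual_set x u b)" and supp: "\<forall>i\<ge>n. a i = 0"
  shows "\<bar>\<Sum>i<n. a i * b i\<bar> \<le> dualnorm x u b * Znorm x u a"
proof (cases "Znorm x u a = 0")
  case True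
  then have "a i = 0" for i using abs_le_Znorm[OF supp, of i] by simp
  then show ?thesis using True by simp
next
  case False
  define Z where "Z = Znorm x u a"
  have Z: "0 < Z" using False Znorm_nonneg[OF supp] unfolding Z_def by simp
  have "Znorm x u (\<lambda>i. (1 / Z) * a i) \<le> 1"
    using Znorm_scale_le[OF supp, of "1 / Z"] Z unfolding Z_def by simp
  then have "\<bar>\<Sum>i<n. (1 / Z) * a i * b i\<bar> \<in> dual_set x u b"
    unfolding dual_set_def mem_Collect_eq using supp
    by (intro exI[of _ "\<lambda>i. (1 / Z) * a i"] exI[of _ n]) simp
  then have "\<bar>\<Sum>i<n. (1 / Z) * a i * b i\<bar> \<le> dualnorm x u b"
    unfolding dualnorm_def using bdd by (rule cSup_upper)
  moreover have "\<bar>\<Sum>i<n. (1 / Z) * a i * b i\<bar> = \<bar>\<Sum>i<n. a i * b i\<bar> / Z"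
    using Z by (simp add: abs_divide flip: sum_divide_distrib)
  ultimately have "\<bar>\<Sum>i<n. a i * b i\<bar> / Z \<le> dualnorm x u b" by simp
  then show ?thesis using Z unfolding Z_def[symmetric] by (simp add: pos_divide_le_eq)
qed

lemma abs_le_dualnorm:
  assumes bdd: "bdd_above (dual_set x u b)"
  shows "\<bar>b i\<bar> \<le> dualnorm x u b"
proof -
  define a where "a j = (if j = i then 1 else 0::real)" for j
  have supp: "\<forall>j\<ge>Suc i. a j = 0" unfolding a_def by simp
  have "\<bar>b i\<bar> = \<bar>\<Sum>j<Suc i. a j * b j\<bar>" unfolding a_def by simp
  also have "\<dots> \<le> dualnorm x u b * Znorm x u a" by (rule abs_pairing_le[OF bdd supp])
  also have "\<dots> \<le> dualnorm x u b * 1"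
    using Znorm_le_sum_abs[OF supp] dualnorm_nonneg[OF bdd]
    unfolding a_def by (intro mult_left_mono) simp_all
  finally show ?thesis by simp
qed

lemma bdd_above_dual_set_finite_support:
  assumes supp_b: "\<forall>i\<ge>M. b i = 0"
  shows "bdd_above (dual_set x u b)"
proof (rule bdd_aboveI)
  fix s assume "s \<in> dual_set x u b"
  then obtain a n where a: "\<forall>i\<ge>n. a i = 0" "Znorm x u a \<le> 1" "s = \<bar>\<Sum>i<n. a i * b i\<bar>"
    unfolding dual_set_def by blast
  have "(\<Sum>i<n. a i * b i) = (\<Sum>i<max n M. a i * b i)"
    using a(1) by (intro sum.mono_neutral_left) auto
  also have "\<dots> = (\<Sum>i<M. a i * b i)"
    using supp_b by (intro sum.mono_neutral_right) auto
  finally have "s \<le> (\<Sum>i<M. \<bar>a i * b i\<bar>)" using a(3) by (simp add: sum_abs)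
  also have "\<dots> \<le> (\<Sum>i<M. \<bar>b i\<bar>)"
  proof (rule sum_mono)
    fix i have "\<bar>a i\<bar> \<le> 1" using abs_le_Znorm[OF a(1), of i] a(2) by simp
    then show "\<bar>a i * b i\<bar> \<le> \<bar>b i\<bar>" by (simp add: abs_mult mult_left_le_one_le)
  qed
  finally show "s \<le> (\<Sum>i<M. \<bar>b i\<bar>)" .
qed

lemma dualnorm_lincomb_le:
  assumes bdd: "bdd_above (dual_set x u b)" and bdd': "bdd_above (dual_set x u b')"
  shows "bdd_above (dual_set x u (\<lambda>i. \<alpha> * b i + \<beta> * b' i))"
    and "dualnorm x u (\<lambda>i. \<alpha> * b i + \<beta> * b' i) \<le> \<bar>\<alpha>\<bar> * dualnorm x u b + \<bar>\<beta>\<bar> * dualnorm x u b'"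
proof -
  have bound: "s \<le> \<bar>\<alpha>\<bar> * dualnorm x u b + \<bar>\<beta>\<bar> * dualnorm x u b'"
    if s_in: "s \<in> dual_set x u (\<lambda>i. \<alpha> * b i + \<beta> * b' i)" for s
  proof -
    obtain a n where a: "\<forall>i\<ge>n. a i = 0" "Znorm x u a \<le> 1"
      and s: "s = \<bar>\<Sum>i<n. a i * (\<alpha> * b i + \<beta> * b' i)\<bar>"
      using s_in unfolding dual_set_def by blast
    have le_dualnorm: "\<bar>\<Sum>i<n. a i * c i\<bar> \<le> dualnorm x u c" if "bdd_above (dual_set x u c)" for c
    proof -
      have "\<bar>\<Sum>i<n. a i * c i\<bar> \<in> dual_set x u c" unfolding dual_set_def using a by blast
      then show ?thesis unfolding dualnorm_def using that by (rule cSup_upper)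
    qed
    have "s = \<bar>\<alpha> * (\<Sum>i<n. a i * b i) + \<beta> * (\<Sum>i<n. a i * b' i)\<bar>"
      unfolding s by (simp add: sum_distrib_left sum.distrib algebra_simps)
    also have "\<dots> \<le> \<bar>\<alpha>\<bar> * \<bar>\<Sum>i<n. a i * b i\<bar> + \<bar>\<beta>\<bar> * \<bar>\<Sum>i<n. a i * b' i\<bar>"
      using abs_triangle_ineq[of "\<alpha> * (\<Sum>i<n. a i * b i)" "\<beta> * (\<Sum>i<n. a i * b' i)"]
      by (simp add: abs_mult)
    also have "\<dots> \<le> \<bar>\<alpha>\<bar> * dualnorm x u b + \<bar>\<beta>\<bar> * dualnorm x u b'"
      using le_dualnorm[OF bdd] le_dualnorm[OF bdd'] by (intro add_mono mult_left_mono) simp_all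
    finally show ?thesis .
  qed
  show "bdd_above (dual_set x u (\<lambda>i. \<alpha> * b i + \<beta> * b' i))" using bound by (rule bdd_aboveI)
  show "dualnorm x u (\<lambda>i. \<alpha> * b i + \<beta> * b' i) \<le> \<bar>\<alpha>\<bar> * dualnorm x u b + \<bar>\<beta>\<bar> * dualnorm x u b'"
    using bound by (rule dualnorm_least)
qed

end

context Zspace
begin

lemma finite_support_in_Yspace:
  assumes "\<forall>i\<ge>M. b i = 0"
  shows "b \<in> Yspace x u"
proof -
  have "dualnorm x u (\<lambda>i. 0) \<le> 0" by (rule dualnorm_least) (auto simp: dual_set_def)
  moreover have "bdd_above (dual_set x u (\<lambda>i. 0))"
    by (rule bdd_above_dual_set_finite_support[of 0]) simp
  ultimately show ?thesis
    unfolding Yspace_def using assms by (auto intro!: exI[of _ b])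
qed

lemma Yspace_bdd_above: "b \<in> Yspace x u \<Longrightarrow> bdd_above (dual_set x u b)"
proof -
  assume "b \<in> Yspace x u"
  then have "\<forall>\<epsilon>>0. \<exists>c m. (\<forall>i\<ge>m. c i = 0) \<and> bdd_above (dual_set x u (\<lambda>i. b i - c i))
      \<and> dualnorm x u (\<lambda>i. b i - c i) < \<epsilon>"
    unfolding Yspace_def by simp
  from this[rule_format, of 1] obtain c m
    where c: "\<forall>i\<ge>m. c i = 0" "bdd_above (dual_set x u (\<lambda>i. b i - c i))"
    by auto
  have "bdd_above (dual_set x u c)" by (rule bdd_above_dual_set_finite_support[OF c(1)])
  from dualnorm_lincomb_le(1)[OF c(2) this, of 1 1] show ?thesis by simp
qed

lemma Yspace_lincomb:
  assumes b: "b \<in> Yspace x u" and b': "b' \<in> Yspace x u"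
  shows "(\<lambda>i. \<alpha> * b i + \<beta> * b' i) \<in> Yspace x u"
  unfolding Yspace_def
proof (intro CollectI allI impI)
  fix \<epsilon> :: real assume "0 < \<epsilon>"
  define \<delta> where "\<delta> = \<epsilon> / (\<bar>\<alpha>\<bar> + \<bar>\<beta>\<bar> + 1)"
  have \<delta>: "0 < \<delta>" unfolding \<delta>_def using \<open>0 < \<epsilon>\<close> by (simp add: add_nonneg_pos)
  obtain c m where c: "\<forall>i\<ge>m. c i = 0" "bdd_above (dual_set x u (\<lambda>i. b i - c i))"
     "dualnorm x u (\<lambda>i. b i - c i) < \<delta>"
    using b \<delta> unfolding Yspace_def by blast
  obtain c' m' where c': "\<forall>i\<ge>m'. c' i = 0" "bdd_above (dual_set x u (\<lambda>i. b' i - c' i))"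
     "dualnorm x u (\<lambda>i. b' i - c' i) < \<delta>"
    using b' \<delta> unfolding Yspace_def by blast
  define d where "d i = \<alpha> * c i + \<beta> * c' i" for i
  have diff: "(\<lambda>i. \<alpha> * b i + \<beta> * b' i - d i) = (\<lambda>i. \<alpha> * (b i - c i) + \<beta> * (b' i - c' i))"
    unfolding d_def by (simp add: algebra_simps)
  note lin = dualnorm_lincomb_le[OF c(2) c'(2), of \<alpha> \<beta>]
  have "dualnorm x u (\<lambda>i. \<alpha> * (b i - c i) + \<beta> * (b' i - c' i)) \<le> (\<bar>\<alpha>\<bar> + \<bar>\<beta>\<bar>) * \<delta>"
    using lin(2) c(3) c'(3) by (smt (verit) abs_ge_zero distrib_right mult_left_mono)
  also have "\<dots> < \<epsilon>"
    using \<open>0 < \<epsilon>\<close> unfolding \<delta>_def by (simp add: field_simps add_nonneg_pos)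
  finally show "\<exists>d m. (\<forall>i\<ge>m. d i = 0) \<and> bdd_above (dual_set x u (\<lambda>i. \<alpha> * b i + \<beta> * b' i - d i))
      \<and> dualnorm x u (\<lambda>i. \<alpha> * b i + \<beta> * b' i - d i) < \<epsilon>"
    using c(1) c'(1) lin(1) unfolding diff[symmetric]
    by (intro exI[of _ d] exI[of _ "max m m'"]) (simp add: d_def)
qed

lemma tail_subspace_closed:
  assumes s: "\<And>n. s n \<in> tail_subspace x u m" and y: "y \<in> Yspace x u"
    and lim: "(\<lambda>n. dualnorm x u (\<lambda>i. s n i - y i)) \<longlonglongrightarrow> 0"
  shows "y \<in> tail_subspace x u m"
proof -
  have "y i = 0" if "i < m" for i
  proof -
    have "\<bar>y i\<bar> \<le> dualnorm x u (\<lambda>i. s n i - y i)" for n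
    proof -
      have sn: "s n \<in> Yspace x u" "s n i = 0" using s[of n] that unfolding tail_subspace_def by auto
      have "(\<lambda>i. 1 * s n i + (-1) * y i) \<in> Yspace x u" by (rule Yspace_lincomb[OF sn(1) y])
      then have "bdd_above (dual_set x u (\<lambda>i. s n i - y i))" by (simp add: Yspace_bdd_above)
      from abs_le_dualnorm[OF this, of i] sn(2) show ?thesis by simp
    qed
    then have "\<bar>y i\<bar> \<le> 0" using lim by (intro LIMSEQ_le_const[of _ 0]) auto
    then show ?thesis by simp
  qed
  then show ?thesis using y unfolding tail_subspace_def by blast
qed

lemma Yspace_decompose_tail:
  assumes v: "v \<in> Yspace x u"
  shows "\<exists>w\<in>tail_subspace x u m. \<exists>c.
    v = (\<lambda>i. w i + (\<Sum>s\<in>(\<lambda>j k. if k = j then 1 else 0 :: real) ` {..<m}. c s * s i))"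
proof -
  define h where "h i = (if i < m then v i else 0)" for i
  define c where "c s = (\<Sum>i<m. s i * v i)" for s :: "nat \<Rightarrow> real"
  have "h \<in> Yspace x u" by (rule finite_support_in_Yspace[of m]) (simp add: h_def)
  then have "(\<lambda>i. 1 * v i + (-1) * h i) \<in> Yspace x u" by (rule Yspace_lincomb[OF v])
  then have w: "(\<lambda>i. v i - h i) \<in> tail_subspace x u m"
    unfolding tail_subspace_def by (simp add: h_def)
  have inj: "inj_on (\<lambda>j k. if k = j then 1 else 0 :: real) {..<m}"
    by (rule inj_onI) (metis (mono_tags) one_neq_zero)
  have c_unit: "c (\<lambda>k. if k = j then 1 else 0) = v j" if "j < m" for j
  proof -
    have "c (\<lambda>k. if k = j then 1 else 0) = (\<Sum>i<m. if i = j then v i else 0)"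
      unfolding c_def by (rule sum.cong) auto
    then show ?thesis using that by simp
  qed
  have "(\<Sum>s\<in>(\<lambda>j k. if k = j then 1 else 0 :: real) ` {..<m}. c s * s t) = h t" for t
  proof -
    have "(\<Sum>s\<in>(\<lambda>j k. if k = j then 1 else 0 :: real) ` {..<m}. c s * s t)
        = (\<Sum>j<m. if j = t then v j else 0)"
      unfolding sum.reindex[OF inj] using c_unit by (intro sum.cong) auto
    then show ?thesis unfolding h_def by simp
  qed
  then show ?thesis using w by (intro bexI[of _ "\<lambda>i. v i - h i"] exI[of _ c]) auto
qed

lemma closed_fincodim_tail_subspace:
  "closed_fincodim (Yspace x u) (dualnorm x u) (tail_subspace x u m)"
  unfolding closed_fincodim_def
proof (intro conjI)
  show "tail_subspace x u m \<subseteq> Yspace x u" unfolding tail_subspace_def by blast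
  show "(\<lambda>i. 0) \<in> tail_subspace x u m"
    unfolding tail_subspace_def using finite_support_in_Yspace[of 0 "\<lambda>i. 0"] by simp
  show "\<forall>w1\<in>tail_subspace x u m. \<forall>w2\<in>tail_subspace x u m. (\<lambda>i. w1 i + w2 i) \<in> tail_subspace x u m"
    unfolding tail_subspace_def using Yspace_lincomb[of _ _ 1 1] by simp
  show "\<forall>c. \<forall>w\<in>tail_subspace x u m. (\<lambda>i. c * w i) \<in> tail_subspace x u m"
    unfolding tail_subspace_def using Yspace_lincomb[of _ _ _ 0] by fastforce
  show "\<forall>s y. (\<forall>n. s n \<in> tail_subspace x u m) \<and> y \<in> Yspace x u
      \<and> (\<lambda>n. dualnorm x u (\<lambda>i. s n i - y i)) \<longlonglongrightarrow> 0 \<longrightarrow> y \<in> tail_subspace x u m"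
    using tail_subspace_closed by blast
  show "\<exists>S. finite S \<and> S \<subseteq> Yspace x u
      \<and> (\<forall>v\<in>Yspace x u. \<exists>w\<in>tail_subspace x u m. \<exists>c. v = (\<lambda>i. w i + (\<Sum>s\<in>S. c s * s i)))"
  proof (intro exI conjI)
    show "finite ((\<lambda>j k. if k = j then 1 else 0 :: real) ` {..<m})" by simp
    show "(\<lambda>j k. if k = j then 1 else 0 :: real) ` {..<m} \<subseteq> Yspace x u"
    proof
      fix s assume "s \<in> (\<lambda>j k. if k = j then 1 else 0 :: real) ` {..<m}"
      then obtain j where "s = (\<lambda>k. if k = j then 1 else 0 :: real)" by blast
      then show "s \<in> Yspace x u" by (auto intro!: finite_support_in_Yspace[of "Suc j"])
    qed
  qed (use Yspace_decompose_tail in blast)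
qed

end

context Zspace_unconditional
begin

lemma dualnorm_tail_le:
  assumes bdd: "bdd_above (dual_set x u b)"
  shows "bdd_above (dual_set x u (tail m b))" and "dualnorm x u (tail m b) \<le> 2 * dualnorm x u b"
proof -
  have bound: "s \<le> 2 * dualnorm x u b" if s_in: "s \<in> dual_set x u (tail m b)" for s
  proof -
    obtain a n where a: "\<forall>i\<ge>n. a i = 0" "Znorm x u a \<le> 1" and s: "s = \<bar>\<Sum>i<n. a i * tail m b i\<bar>"
      using s_in unfolding dual_set_def by blast
    show ?thesis
    proof (cases "m < n")
      case False
      then have "(\<Sum>i<n. a i * tail m b i) = 0" unfolding tail_def by (intro sum.neutral) auto
      then have "s = 0" unfolding s by simp
      then show ?thesis using dualnorm_nonneg[OF bdd] by simp
    next
      case True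
      have "s = \<bar>\<Sum>i<n. window m n a i * b i\<bar>"
        unfolding s tail_def window_def by (intro arg_cong[where f = abs] sum.cong) auto
      also have "\<dots> \<le> dualnorm x u b * Znorm x u (window m n a)"
        by (rule abs_pairing_le[OF bdd]) (simp add: window_def)
      also have "\<dots> \<le> dualnorm x u b * 2"
        using Znorm_window_le[OF a(1) True] a(2) dualnorm_nonneg[OF bdd]
        by (intro mult_left_mono) simp_all
      finally show ?thesis by simp
    qed
  qed
  show "bdd_above (dual_set x u (tail m b))" using bound by (rule bdd_aboveI)
  show "dualnorm x u (tail m b) \<le> 2 * dualnorm x u b" using bound by (rule dualnorm_least)
qed

lemma Yspace_tail_small:
  assumes y: "y \<in> Yspace x u" and \<delta>: "0 < \<delta>"
  obtains M where "\<And>m. M \<le> m \<Longrightarrow> bdd_above (dual_set x u (tail m y)) \<and> dualnorm x u (tail m y) \<le> \<delta>"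
proof -
  have "\<forall>\<epsilon>>0. \<exists>c M. (\<forall>i\<ge>M. c i = 0) \<and> bdd_above (dual_set x u (\<lambda>i. y i - c i))
      \<and> dualnorm x u (\<lambda>i. y i - c i) < \<epsilon>"
    using y unfolding Yspace_def by simp
  from this[rule_format, of "\<delta> / 2"] \<delta> obtain c M where c: "\<forall>i\<ge>M. c i = 0"
    "bdd_above (dual_set x u (\<lambda>i. y i - c i))" "dualnorm x u (\<lambda>i. y i - c i) < \<delta> / 2"
    by auto
  have "bdd_above (dual_set x u (tail m y)) \<and> dualnorm x u (tail m y) \<le> \<delta>" if "M \<le> m" for m
  proof -
    have "tail m y = tail m (\<lambda>i. y i - c i)" using c(1) that unfolding tail_def by auto
    then show ?thesis using dualnorm_tail_le[OF c(2), of m] c(3) by simp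
  qed
  then show ?thesis using that by blast
qed

end

section \<open>Almost block sequences\<close>

text \<open>K \<le> l 0 makes every window [l j, l (j+1)) start after K, as the Tsirelson property
  requires for a block sequence of length K.\<close>

definition almost_block :: "(nat \<Rightarrow> 'a::real_normed_vector) \<Rightarrow> (nat \<Rightarrow> 'b::real_normed_vector)
    \<Rightarrow> nat \<Rightarrow> real \<Rightarrow> (nat \<Rightarrow> real) list \<Rightarrow> (nat \<Rightarrow> nat) \<Rightarrow> bool" where
  "almost_block x u K \<delta> ys l \<longleftrightarrow> K \<le> l 0 \<and>
    (\<forall>j. Suc j < length ys \<longrightarrow> l j < l (Suc j)) \<and>
    (\<forall>j<length ys. ys ! j \<in> Yspace x u \<and> dualnorm x u (ys ! j) = 1 \<and> (\<forall>i<l j. (ys ! j) i = 0)) \<and>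
    (\<forall>j. Suc j < length ys \<longrightarrow> bdd_above (dual_set x u (tail (l (Suc j)) (ys ! j)))
        \<and> dualnorm x u (tail (l (Suc j)) (ys ! j)) \<le> \<delta>)"

lemma almost_block_snoc:
  assumes B: "almost_block x u K \<delta> ys l" and n: "n = length ys"
    and first: "n = 0 \<Longrightarrow> K \<le> m"
    and next_marker: "0 < n \<Longrightarrow> l (n - 1) < m \<and> bdd_above (dual_set x u (tail m (ys ! (n - 1))))
      \<and> dualnorm x u (tail m (ys ! (n - 1))) \<le> \<delta>"
    and y: "y \<in> Yspace x u" "dualnorm x u y = 1" "\<forall>i<m. y i = 0"
  shows "almost_block x u K \<delta> (ys @ [y]) (l(n := m))"
  unfolding almost_block_def
proof (intro conjI)
  note B' = B[unfolded almost_block_def, folded n]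
  have nth: "(ys @ [y]) ! j = (if j < n then ys ! j else y)" if "j \<le> n" for j
    using that unfolding n by (auto simp: nth_append)
  show "K \<le> (l(n := m)) 0" using B' first by (cases "n = 0") auto
  show "\<forall>j. Suc j < length (ys @ [y]) \<longrightarrow> (l(n := m)) j < (l(n := m)) (Suc j)"
  proof (intro allI impI)
    fix j assume j: "Suc j < length (ys @ [y])"
    show "(l(n := m)) j < (l(n := m)) (Suc j)"
    proof (cases "Suc j < n")
      case True
      then show ?thesis using B' by simp
    next
      case False
      then have "j = n - 1" "Suc j = n" using j unfolding n by auto
      then show ?thesis using next_marker by simp
    qed
  qed
  show "\<forall>j<length (ys @ [y]). (ys @ [y]) ! j \<in> Yspace x u \<and> dualnorm x u ((ys @ [y]) ! j) = 1
      \<and> (\<forall>i<(l(n := m)) j. ((ys @ [y]) ! j) i = 0)"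
    using B' y nth unfolding n by (auto simp: less_Suc_eq)
  show "\<forall>j. Suc j < length (ys @ [y]) \<longrightarrow>
      bdd_above (dual_set x u (tail ((l(n := m)) (Suc j)) ((ys @ [y]) ! j)))
      \<and> dualnorm x u (tail ((l(n := m)) (Suc j)) ((ys @ [y]) ! j)) \<le> \<delta>"
  proof (intro allI impI)
    fix j assume j: "Suc j < length (ys @ [y])"
    show "bdd_above (dual_set x u (tail ((l(n := m)) (Suc j)) ((ys @ [y]) ! j)))
      \<and> dualnorm x u (tail ((l(n := m)) (Suc j)) ((ys @ [y]) ! j)) \<le> \<delta>"
    proof (cases "Suc j < n")
      case True
      then show ?thesis using B' nth[of j] by simp
    next
      case False
      then have "j = n - 1" "0 < n" using j unfolding n by auto
      then show ?thesis using next_marker nth[of j] by simp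
    qed
  qed
qed

context Zspace_unconditional
begin

lemma almost_block_extend:
  assumes B: "almost_block x u K \<delta> ys l" and \<delta>: "0 < \<delta>"
  obtains m where "\<And>y. y \<in> tail_subspace x u m \<Longrightarrow> dualnorm x u y = 1
    \<Longrightarrow> almost_block x u K \<delta> (ys @ [y]) (l(length ys := m))"
proof -
  define n where "n = length ys"
  obtain M where M: "0 < n \<Longrightarrow> M \<le> m' \<Longrightarrow> bdd_above (dual_set x u (tail m' (ys ! (n - 1))))
      \<and> dualnorm x u (tail m' (ys ! (n - 1))) \<le> \<delta>" for m'
  proof (cases "n = 0")
    case True
    then show ?thesis by (intro that[of 0]) simp
  next
    case False
    then have "ys ! (n - 1) \<in> Yspace x u" using B unfolding almost_block_def n_def by simp
    then show ?thesis using Yspace_tail_small[OF _ \<delta>] that by metis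
  qed
  define m where "m = max (max K (Suc (l (n - 1)))) M"
  have "almost_block x u K \<delta> (ys @ [y]) (l(n := m))"
    if "y \<in> tail_subspace x u m" "dualnorm x u y = 1" for y
    using that M[of m] unfolding tail_subspace_def m_def
    by (intro almost_block_snoc[OF B n_def]) auto
  then show ?thesis using that unfolding n_def by blast
qed

lemma abs_pairing_almost_block:
  assumes y: "y \<in> Yspace x u" "dualnorm x u y = 1" "\<forall>i<a. y i = 0" and ab: "a < b"
    and z: "\<forall>i\<ge>n. z i = 0" "Znorm x u z \<le> 1" and \<delta>: "0 \<le> \<delta>"
    and tail: "n \<le> b \<or> (bdd_above (dual_set x u (tail b y)) \<and> dualnorm x u (tail b y) \<le> \<delta>)"
  shows "\<bar>\<Sum>i<n. z i * y i\<bar> \<le> Znorm x u (window a b z) + \<delta>"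
proof -
  have "z i * y i = window a b z i * y i + z i * tail b y i" for i
    unfolding window_def tail_def using y(3) ab by auto
  then have "\<bar>\<Sum>i<n. z i * y i\<bar> \<le> \<bar>\<Sum>i<n. window a b z i * y i\<bar> + \<bar>\<Sum>i<n. z i * tail b y i\<bar>"
    by (simp add: sum.distrib abs_triangle_ineq)
  also have "\<bar>\<Sum>i<n. window a b z i * y i\<bar> \<le> Znorm x u (window a b z)"
    using abs_pairing_le[OF Yspace_bdd_above[OF y(1)], of n "window a b z"] y(2) z(1)
    by (simp add: window_def)
  also have "\<bar>\<Sum>i<n. z i * tail b y i\<bar> \<le> \<delta>"
  proof (cases "n \<le> b")
    case True
    then have "(\<Sum>i<n. z i * tail b y i) = 0" unfolding tail_def by (intro sum.neutral) auto
    then show ?thesis using \<delta> by simp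
  next
    case False
    then have bdd: "bdd_above (dual_set x u (tail b y))" and small: "dualnorm x u (tail b y) \<le> \<delta>"
      using tail by auto
    have "\<bar>\<Sum>i<n. z i * tail b y i\<bar> \<le> dualnorm x u (tail b y) * Znorm x u z"
      by (rule abs_pairing_le[OF bdd z(1)])
    also have "\<dots> \<le> \<delta> * 1"
      using small z(2) dualnorm_nonneg[OF bdd] Znorm_nonneg[OF z(1)] by (intro mult_mono) simp_all
    finally show ?thesis by simp
  qed
  finally show ?thesis by simp
qed

end

context Zspace_tsirelson
begin

lemma almost_block_pairing_sum_le:
  assumes B: "almost_block x u K \<delta> ys l" and len: "length ys = K" and \<delta>: "0 \<le> \<delta>"
    and z: "\<forall>i\<ge>n. z i = 0" "Znorm x u z \<le> 1"
  shows "(\<Sum>j<K. \<bar>\<Sum>i<n. z i * (ys ! j) i\<bar>) \<le> 2 * C + real K * \<delta>"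
proof -
  note B' = B[unfolded almost_block_def len]
  \<comment> \<open>The markers l, closed off by a last marker beyond the support of z.\<close>
  define e where "e j = (if j < K then l j else Suc (l (K - 1)) + n)" for j
  have e: "e j < e (Suc j)" if j: "j < K" for j
  proof (cases "Suc j < K")
    case True
    then show ?thesis using B' unfolding e_def by simp
  next
    case False
    then have "j = K - 1" using j by simp
    then show ?thesis using j unfolding e_def by simp
  qed
  have K_e: "K \<le> e 0" using B' unfolding e_def by simp
  have "(\<Sum>j<K. \<bar>\<Sum>i<n. z i * (ys ! j) i\<bar>) \<le> (\<Sum>j<K. Znorm x u (window (e j) (e (Suc j)) z) + \<delta>)"
  proof (rule sum_mono)
    fix j assume "j \<in> {..<K}"
    then have j: "j < K" by simp
    show "\<bar>\<Sum>i<n. z i * (ys ! j) i\<bar> \<le> Znorm x u (window (e j) (e (Suc j)) z) + \<delta>"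
    proof (rule abs_pairing_almost_block[OF _ _ _ e[OF j] z \<delta>])
      show "ys ! j \<in> Yspace x u" "dualnorm x u (ys ! j) = 1" "\<forall>i<e j. (ys ! j) i = 0"
        using B' j unfolding e_def by auto
      show "n \<le> e (Suc j) \<or> bdd_above (dual_set x u (tail (e (Suc j)) (ys ! j)))
          \<and> dualnorm x u (tail (e (Suc j)) (ys ! j)) \<le> \<delta>"
        using B' j unfolding e_def by (cases "Suc j < K") auto
    qed
  qed
  also have "\<dots> = (\<Sum>j<K. Znorm x u (window (e j) (e (Suc j)) z)) + real K * \<delta>"
    by (simp add: sum.distrib)
  also have "\<dots> \<le> 2 * C + real K * \<delta>"
  proof -
    have "2 * C * Znorm x u z \<le> 2 * C" using z(2) C_pos by simp
    then show ?thesis using sum_Znorm_windows_le[OF e K_e z(1)] by linarith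
  qed
  finally show ?thesis .
qed

lemma almost_block_c0_estimate:
  assumes B: "almost_block x u K \<delta> ys l" and len: "length ys = K" and K: "0 < K" and \<delta>: "0 \<le> \<delta>"
  shows "dualnorm x u (\<lambda>i. \<Sum>j<K. a j * (ys ! j) i) \<le> (2 * C + real K * \<delta>) * (MAX j\<in>{..<K}. \<bar>a j\<bar>)"
proof (rule dualnorm_least)
  define M where "M = (MAX j\<in>{..<K}. \<bar>a j\<bar>)"
  have a_M: "\<bar>a j\<bar> \<le> M" if "j < K" for j unfolding M_def using that by (intro Max_ge) auto
  have M: "0 \<le> M" using a_M[OF K] by linarith
  fix s assume "s \<in> dual_set x u (\<lambda>i. \<Sum>j<K. a j * (ys ! j) i)"
  then obtain z n where z: "\<forall>i\<ge>n. z i = 0" "Znorm x u z \<le> 1"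
    and s: "s = \<bar>\<Sum>i<n. z i * (\<Sum>j<K. a j * (ys ! j) i)\<bar>"
    unfolding dual_set_def by blast
  have "(\<Sum>i<n. z i * (\<Sum>j<K. a j * (ys ! j) i)) = (\<Sum>i<n. \<Sum>j<K. a j * (z i * (ys ! j) i))"
    by (simp add: sum_distrib_left algebra_simps)
  also have "\<dots> = (\<Sum>j<K. a j * (\<Sum>i<n. z i * (ys ! j) i))"
    by (subst sum.swap) (simp add: sum_distrib_left)
  finally have "s \<le> (\<Sum>j<K. \<bar>a j\<bar> * \<bar>\<Sum>i<n. z i * (ys ! j) i\<bar>)"
    unfolding s using sum_abs[of "\<lambda>j. a j * (\<Sum>i<n. z i * (ys ! j) i)" "{..<K}"]
    by (simp add: abs_mult)
  also have "\<dots> \<le> (\<Sum>j<K. M * \<bar>\<Sum>i<n. z i * (ys ! j) i\<bar>)"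
    using a_M by (intro sum_mono mult_right_mono) auto
  also have "\<dots> \<le> M * (2 * C + real K * \<delta>)"
    unfolding sum_distrib_left[symmetric]
    using almost_block_pairing_sum_le[OF B len \<delta> z] M by (rule mult_left_mono)
  finally show "s \<le> (2 * C + real K * \<delta>) * (MAX j\<in>{..<K}. \<bar>a j\<bar>)"
    unfolding M_def by (simp add: mult.commute)
qed

lemma asym_game_almost_block:
  assumes K: "0 < K"
  shows "length ys + r = K \<Longrightarrow> almost_block x u K (1 / K) ys l
    \<Longrightarrow> asym_game (Yspace x u) (dualnorm x u) (2 * C + 1) r ys"
proof (induction r arbitrary: ys l)
  case 0
  then have "length ys = K" by simp
  with almost_block_c0_estimate[OF "0.prems"(2) this K] K show ?case by simp
next
  case (Suc r)
  obtain m where m: "\<And>y. y \<in> tail_subspace x u m \<Longrightarrow> dualnorm x u y = 1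
      \<Longrightarrow> almost_block x u K (1 / K) (ys @ [y]) (l(length ys := m))"
    using almost_block_extend[OF Suc.prems(2)] K by auto
  have "asym_game (Yspace x u) (dualnorm x u) (2 * C + 1) r (ys @ [y])"
    if "y \<in> tail_subspace x u m" "dualnorm x u y = 1" for y
    using Suc.IH[OF _ m[OF that]] Suc.prems(1) by simp
  then show ?case using closed_fincodim_tail_subspace by auto
qed

end

theorem propositionA7:
  fixes x :: "nat \<Rightarrow> 'a::banach" and u :: "nat \<Rightarrow> 'b::banach"
  assumes "\<forall>n. norm (x n) = 1"
    and "sphere 0 1 \<subseteq> closure (range x \<union> range (\<lambda>n. - x n))"
    and "schauder_basis u" and "\<forall>n. norm (u n) = 1"
    and "unconditional1 u" and "boundedly_complete u"
    and "tsirelson u"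
  shows "asymptotic_c0 (Yspace x u) (dualnorm x u)"
proof -
  obtain C where C: "0 < C" "tsirelson_const u C"
    using assms(7) unfolding tsirelson_iff_const by blast
  interpret Zspace_tsirelson x u C using assms C by unfold_locales auto
  have "asym_game (Yspace x u) (dualnorm x u) (2 * C + 1) k []" if "1 \<le> k" for k
    using asym_game_almost_block[of k "[]" k "\<lambda>_. k"] that by (simp add: almost_block_def)
  then show ?thesis unfolding asymptotic_c0_def using C(1) by (intro exI[of _ "2 * C + 1"]) auto
qed

end
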